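(* Let $A$ be a finite subset of $\mathbb{R}^n$. The following are equivalent: (i) $A$ is a spectral set; (ii) there exists a continuous function $c:\mathbb{R}^n\to\mathbb{C}$ such that $c(a'-a)=\delta_{aa'}$ for all $a,a'\in A$ (Kronecker delta), $c(-t)=\overline{c(t)}$ for all $t\in\mathbb{R}^n$, and $c(u_1-u_2)=\sum_{a\in A}c(u_1+a)\overline{c(u_2+a)}$ for all $u_1,u_2\in\mathbb{R}^n$.
   Context: For $\lambda,x\in\mathbb{R}^n$ let $e_\lambda(x)=e^{2\pi i\lambda\cdot x}$. For a finite set $A\subset\mathbb{R}^n$ with $N=\#A$, let $\delta_A=\frac1N\sum_{a\in A}\delta_a$. $A$ is called spectral if there is $\Lambda\subset\mathbb{R}^n$ such that $\{e_\lambda|_A\}_{\lambda\in\Lambda}$ is an orthogonal basis of $L^2(\delta_A)$. *)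

theory Defs
  imports "HOL-Analysis.Analysis"
begin

definition expo :: "real^'n \<Rightarrow> real^'n \<Rightarrow> complex" where
  "expo lam x = exp (2 * complex_of_real pi * \<i> * complex_of_real (lam \<bullet> x))"

definition L2_inner :: "'a set \<Rightarrow> ('a \<Rightarrow> complex) \<Rightarrow> ('a \<Rightarrow> complex) \<Rightarrow> complex" where
  "L2_inner A f g = (1 / of_nat (card A)) * (\<Sum>a\<in>A. f a * cnj (g a))"

definition orth_basis_exps :: "(real^'n) set \<Rightarrow> (real^'n) set \<Rightarrow> bool" where
  "orth_basis_exps A Lam \<longleftrightarrow>
     (\<forall>l\<in>Lam. \<forall>l'\<in>Lam. l \<noteq> l' \<longrightarrow> L2_inner A (expo l) (expo l') = 0) \<and>
     (\<forall>f :: real^'n \<Rightarrow> complex. \<exists>L0 coef. finite L0 \<and> L0 \<subseteq> Lam \<and>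
        (\<forall>a\<in>A. f a = (\<Sum>l\<in>L0. coef l * expo l a)))"

definition spectral :: "(real^'n) set \<Rightarrow> bool" where
  "spectral A \<longleftrightarrow> (\<exists>Lam. orth_basis_exps A Lam)"

end

(*
  (i) \<Longrightarrow> (ii): a spectrum \<Lambda> of A is finite, and c = (1/#A) \<Sum>{e_\<lambda> | \<lambda> \<in> \<Lambda>} works;
  its properties are the orthogonality relations of the e_\<lambda> on A together with the dual
  relations obtained by expanding the indicator of a point of A in the basis.

  (ii) \<Longrightarrow> (i): the translates x \<mapsto> c (x + a), a \<in> A, span a finite-dimensional,
  translation-invariant space V of bounded continuous functions. By the identity for c, the form
  <f, g> = \<Sum>{f (-b) * cnj (g (-b)) | b \<in> A} is translation invariant on V and turns
  \<alpha> \<mapsto> \<Sum>{\<alpha> a * c (\<cdot> + a) | a \<in> A} into an isometry from L^2(A) onto V. Hence the exponentials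
  in V are pairwise orthogonal, and their orthogonal complement in V is again translation
  invariant. Commuting translations have a common eigenfunction in every nonzero invariant
  subspace, and a bounded continuous common eigenfunction is a multiple of an exponential; so the
  complement is zero, c is a combination of the exponentials in V, and their frequencies form a
  spectrum of A.
*)

theory Submission
  imports Defs "HOL-Library.Function_Algebras" "Jordan_Normal_Form.Spectral_Radius"
begin

(* Jordan_Normal_Form's scalar product of vectors would make \<bullet> ambiguous. *)
no_notation scalar_prod (infix \<open>\<bullet>\<close> 70)

section \<open>Exponentials\<close>

lemma expo_add: "expo l (x + y) = expo l x * expo l y"
  unfolding expo_def by (simp add: inner_add_right ring_distribs exp_add)

lemma expo_uminus: "expo l (- x) = cnj (expo l x)"
  unfolding expo_def by (simp add: exp_cnj)

lemma expo_mult_cnj: "expo l x * cnj (expo l x) = 1"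
  unfolding expo_def by (simp add: exp_cnj exp_add[symmetric])

lemma expo_diff: "expo l (x - y) = expo l x * cnj (expo l y)"
  using expo_add[of l x "- y"] by (simp add: expo_uminus)

lemma expo_nonzero: "expo l x \<noteq> 0"
  unfolding expo_def by simp

lemma continuous_on_expo: "continuous_on S (expo l)"
  unfolding expo_def by (intro continuous_intros)

lemma expo_mult_cnj_expo: "expo l x * cnj (expo l' x) = expo (l - l') x"
  unfolding expo_def by (simp add: exp_cnj exp_add[symmetric] algebra_simps)

lemma expo_eq_minus_one:
  assumes "l \<noteq> 0"
  obtains s where "expo l s = -1"
proof
  have "l \<bullet> l > 0" using assms by simp
  then have "l \<bullet> ((1 / (2 * (l \<bullet> l))) *\<^sub>R l) = 1 / 2" by simp
  then show "expo l ((1 / (2 * (l \<bullet> l))) *\<^sub>R l) = -1"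
    using assms unfolding expo_def by simp
qed

lemma inj_expo: "inj expo"
proof (rule injI, rule ccontr)
  fix l l' :: "real^'n"
  assume "expo l = expo l'" "l \<noteq> l'"
  then have "expo (l - l') s = 1" for s
    using expo_mult_cnj_expo[of l s l'] expo_mult_cnj[of l s] by simp
  moreover obtain s where "expo (l - l') s = -1"
    using expo_eq_minus_one \<open>l \<noteq> l'\<close> by (metis right_minus_eq)
  ultimately show False by simp
qed

section \<open>Continuous bounded characters\<close>

lemma continuous_on_translate:
  fixes f :: "'a::real_normed_vector \<Rightarrow> 'b::topological_space"
  assumes "continuous_on UNIV f"
  shows "continuous_on UNIV (\<lambda>x. f (x + a))"
  using continuous_on_compose[of UNIV "\<lambda>x. x + a" f] continuous_on_subset[OF assms]
  by (simp add: o_def continuous_on_add continuous_on_id continuous_on_const)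

lemma additive_continuous_imp_scaleR:
  fixes phi :: "real \<Rightarrow> 'a::real_normed_vector"
  assumes add: "\<And>r s. phi (r + s) = phi r + phi s" and cont: "continuous_on UNIV phi"
  shows "phi r = r *\<^sub>R phi 1"
proof -
  define psi where "psi r = phi r - r *\<^sub>R phi 1" for r
  have psi_add: "psi (r + s) = psi r + psi s" for r s
    unfolding psi_def by (simp add: add scaleR_add_left)
  have psi_nat: "psi (of_nat n * r) = of_nat n *\<^sub>R psi r" for n r
    using psi_add[of 0 0] by (induction n) (simp_all add: psi_add distrib_right scaleR_add_left)
  have psi_uminus: "psi (- r) = - psi r" for r
    using psi_add[of r "- r"] psi_add[of 0 0] by (simp add: eq_neg_iff_add_eq_0 add.commute)
  have psi_int: "psi (of_int i) = 0" for i
    using psi_nat[of "nat \<bar>i\<bar>" 1] psi_uminus[of "of_nat (nat \<bar>i\<bar>)"]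
    by (cases "i \<ge> 0") (simp_all add: psi_def)
  have "psi q = 0" if "q \<in> \<rat>" for q
  proof -
    from that obtain i n where q: "q = of_int i / of_nat n" and "n \<noteq> 0"
      unfolding Rats_eq_int_div_nat by auto
    then have "of_nat n * q = of_int i" by simp
    then have "of_nat n *\<^sub>R psi q = 0" using psi_nat[of n q] psi_int by simp
    with \<open>n \<noteq> 0\<close> show ?thesis by simp
  qed
  moreover have "continuous_on UNIV psi"
    unfolding psi_def by (intro continuous_on_diff continuous_on_scaleR cont continuous_on_id continuous_on_const)
  then have "closed {r \<in> UNIV. psi r = 0}"
    using closed_UNIV by (rule continuous_closed_preimage_constant)
  ultimately have "closure \<rat> \<subseteq> {r \<in> UNIV. psi r = 0}" by (intro closure_minimal) auto
  then show ?thesis using Rats_closure_real by (auto simp: psi_def)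
qed

lemma additive_continuous_imp_linear:
  fixes f :: "'a::real_normed_vector \<Rightarrow> 'b::real_normed_vector"
  assumes add: "\<And>x y. f (x + y) = f x + f y" and cont: "continuous_on UNIV f"
  shows "linear f"
proof (rule linearI)
  fix r x
  have "f ((r + s) *\<^sub>R x) = f (r *\<^sub>R x) + f (s *\<^sub>R x)" for r s
    by (simp only: add scaleR_add_left)
  moreover have "continuous_on UNIV (\<lambda>r. f (r *\<^sub>R x))"
    using continuous_on_compose[of UNIV "\<lambda>r. r *\<^sub>R x" f] continuous_on_subset[OF cont]
    by (simp add: o_def continuous_on_scaleR continuous_on_id continuous_on_const)
  ultimately have "f (r *\<^sub>R x) = r *\<^sub>R f (1 *\<^sub>R x)"
    by (rule additive_continuous_imp_scaleR)
  then show "f (r *\<^sub>R x) = r *\<^sub>R f x" by simp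
qed (rule add)

lemma exp_eq_1_imp_constant_on:
  fixes h :: "'a::topological_space \<Rightarrow> complex"
  assumes "connected S" "continuous_on S h" "\<And>x. x \<in> S \<Longrightarrow> exp (h x) = 1"
  shows "h constant_on S"
proof (rule continuous_discrete_range_constant[OF assms(1,2)])
  have two_pi_int: "\<exists>n::int. h x = of_int n * (2 * pi * \<i>)" if "x \<in> S" for x
    using assms(3)[OF that] unfolding exp_eq_1 by (auto simp: complex_eq_iff)
  fix x assume "x \<in> S"
  show "\<exists>e>0. \<forall>y. y \<in> S \<and> h y \<noteq> h x \<longrightarrow> e \<le> norm (h y - h x)"
  proof (intro exI[of _ "2 * pi"] conjI allI impI)
    fix y assume "y \<in> S \<and> h y \<noteq> h x"
    then obtain m where m: "h y = of_int m * (2 * pi * \<i>)" using two_pi_int by blast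
    obtain n where n: "h x = of_int n * (2 * pi * \<i>)" using two_pi_int \<open>x \<in> S\<close> by blast
    have "m \<noteq> n" using m n \<open>y \<in> S \<and> h y \<noteq> h x\<close> by auto
    with m n have "norm (h y - h x) = 2 * pi * \<bar>of_int (m - n)\<bar>"
      by (simp add: norm_mult abs_mult flip: left_diff_distrib of_int_diff)
    also have "\<dots> \<ge> 2 * pi" using \<open>m \<noteq> n\<close> by simp
    finally show "2 * pi \<le> norm (h y - h x)" .
  qed simp
qed

lemma bounded_character_norm_eq_1:
  fixes chi :: "'a::real_vector \<Rightarrow> 'b::real_normed_field"
  assumes mult: "\<And>s t. chi (s + t) = chi s * chi t" and "chi 0 = 1"
    and bounded: "\<And>s. norm (chi s) \<le> B"
  shows "norm (chi s) = 1"
proof -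
  have pow: "chi (of_nat k *\<^sub>R s) = chi s ^ k" for k s
    by (induction k) (simp_all add: \<open>chi 0 = 1\<close> mult scaleR_add_left)
  have le1: "norm (chi s) \<le> 1" for s
  proof (rule ccontr)
    assume "\<not> norm (chi s) \<le> 1"
    then obtain k where "B < norm (chi s) ^ k" using real_arch_pow[of "norm (chi s)" B] by auto
    then show False using bounded[of "of_nat k *\<^sub>R s"] by (simp add: pow norm_power)
  qed
  have "norm (chi s) * norm (chi (- s)) = 1"
    using mult[of s "- s"] \<open>chi 0 = 1\<close> by (simp flip: norm_mult)
  moreover have "norm (chi s) * norm (chi (- s)) \<le> norm (chi s)"
    using le1[of "- s"] by (rule mult_left_le) simp
  ultimately show ?thesis using le1[of s] by simp
qed

lemma continuous_bounded_character_eq_expo: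
  fixes chi :: "real^'n \<Rightarrow> complex"
  assumes cont: "continuous_on UNIV chi" and mult: "\<And>s t. chi (s + t) = chi s * chi t"
    and "chi 0 = 1" and bounded: "\<And>s. norm (chi s) \<le> B"
  obtains l where "chi = expo l"
proof -
  have norm1: "norm (chi s) = 1" for s
    using bounded_character_norm_eq_1[OF mult \<open>chi 0 = 1\<close> bounded] .
  then have nonzero: "chi x \<noteq> 0" for x by (metis norm_zero zero_neq_one)
  obtain L where "continuous_on UNIV L" and L: "\<And>x. x \<in> UNIV \<Longrightarrow> chi x = exp (L x)"
    by (rule continuous_logarithm_on_contractible[OF cont contractible_UNIV]) (use nonzero in auto)
  \<comment> \<open>M is additive: its additivity defect is continuous with values in 2\<pi>i\<int>, hence constant.\<close>
  define M where "M x = L x - L 0" for x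
  have "continuous_on UNIV M"
    unfolding M_def by (intro continuous_intros \<open>continuous_on UNIV L\<close>)
  have exp_M: "exp (M x) = chi x" for x
    using L[of x] L[of 0] \<open>chi 0 = 1\<close> unfolding M_def exp_diff by simp
  have "(\<lambda>x. M (x + y) - M x - M y) constant_on UNIV" for y
  proof (rule exp_eq_1_imp_constant_on)
    show "continuous_on UNIV (\<lambda>x. M (x + y) - M x - M y)"
      using continuous_on_translate[OF \<open>continuous_on UNIV M\<close>] \<open>continuous_on UNIV M\<close>
      by (intro continuous_on_diff continuous_on_const)
    show "exp (M (x + y) - M x - M y) = 1" for x
      using nonzero[of x] nonzero[of y] unfolding exp_diff exp_M mult by simp
  qed (rule connected_UNIV)
  have M_add: "M (x + y) = M x + M y" for x y
  proof -
    from \<open>(\<lambda>x. M (x + y) - M x - M y) constant_on UNIV\<close>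
    obtain k where "\<And>z. M (z + y) - M z - M y = k"
      unfolding constant_on_def by blast
    from this[of x] this[of 0] have "M (x + y) - M x - M y = 0" by (simp add: M_def)
    then show ?thesis by (metis diff_diff_eq right_minus_eq)
  qed
  have "linear (\<lambda>x. Im (M x))"
  proof (rule additive_continuous_imp_linear)
    show "Im (M (x + y)) = Im (M x) + Im (M y)" for x y by (simp add: M_add)
    show "continuous_on UNIV (\<lambda>x. Im (M x))"
      using \<open>continuous_on UNIV M\<close> by (rule continuous_on_Im)
  qed
  define l where "l = (1 / (2 * pi)) *\<^sub>R adjoint (\<lambda>x. Im (M x)) 1"
  have "M x = 2 * pi * \<i> * (l \<bullet> x)" for x
  proof (rule complex_eqI)
    have "Im (M x) = x \<bullet> adjoint (\<lambda>x. Im (M x)) 1"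
      using adjoint_works[OF \<open>linear (\<lambda>x. Im (M x))\<close>, of x 1] by simp
    then show "Im (M x) = Im (2 * pi * \<i> * (l \<bullet> x))"
      unfolding l_def inner_scaleR_left by (simp add: inner_commute)
    show "Re (M x) = Re (2 * pi * \<i> * (l \<bullet> x))"
      using norm1[of x] unfolding exp_M[symmetric] by simp
  qed
  then have "chi x = expo l x" for x
    unfolding exp_M[symmetric] expo_def by simp
  then have "chi = expo l" by (rule ext)
  then show thesis by (rule that)
qed

section \<open>Translation-invariant spaces of functions\<close>

definition fun_scale :: "complex \<Rightarrow> ('a \<Rightarrow> complex) \<Rightarrow> 'a \<Rightarrow> complex" where
  "fun_scale r f = (\<lambda>x. r * f x)"

lemma fun_scale_apply [simp]: "fun_scale r f x = r * f x"
  by (simp add: fun_scale_def)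

interpretation fun_vs: vector_space "fun_scale :: complex \<Rightarrow> ('a \<Rightarrow> complex) \<Rightarrow> 'a \<Rightarrow> complex"
  by unfold_locales (simp_all add: fun_scale_def fun_eq_iff algebra_simps)

lemma sum_fun_apply: "(\<Sum>i\<in>S. f i) x = (\<Sum>i\<in>S. f i x)"
  by (induction S rule: infinite_finite_induct) auto

definition translation_invariant :: "('a::plus \<Rightarrow> 'b) set \<Rightarrow> bool" where
  "translation_invariant U \<longleftrightarrow> (\<forall>f\<in>U. \<forall>t. (\<lambda>x. f (x + t)) \<in> U)"

lemma translate_expo: "(\<lambda>x. expo l (x + t)) = fun_scale (expo l t) (expo l)"
  by (simp add: fun_eq_iff expo_add)

lemma (in vector_space) dim_less_if_psubspace:
  assumes "subspace E" "E \<subset> U" "U \<subseteq> span S" "finite S"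
  shows "dim E < dim U"
proof -
  obtain BE where BE: "BE \<subseteq> E" "independent BE" "E \<subseteq> span BE" "card BE = dim E"
    using basis_exists by blast
  obtain BU where BU: "BU \<subseteq> U" "independent BU" "U \<subseteq> span BU" "card BU = dim U"
    using basis_exists by blast
  have "finite BE" "finite BU"
    using independent_span_bound[OF \<open>finite S\<close>] BE(1,2) BU(1,2) assms(2,3) by blast+
  obtain w where "w \<in> U" "w \<notin> E" using assms(2) by blast
  then have "w \<notin> span BE" using span_minimal[OF BE(1) assms(1)] by blast
  then have "independent (insert w BE)" using BE(2) by (rule independent_insertI)
  moreover have "insert w BE \<subseteq> span BU" using \<open>w \<in> U\<close> BE(1) assms(2) BU(3) by blast
  ultimately have "card (insert w BE) \<le> card BU"
    using independent_span_bound[OF \<open>finite BU\<close>] by blast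
  moreover have "w \<notin> BE" using \<open>w \<notin> E\<close> BE(1) by blast
  ultimately show ?thesis using BE(4) BU(4) \<open>finite BE\<close> by simp
qed

lemma matrix_eigenvector_exists:
  fixes M :: "'i \<Rightarrow> 'i \<Rightarrow> complex"
  assumes "finite I" "I \<noteq> {}"
  obtains mu y where "\<exists>i\<in>I. y i \<noteq> 0" "\<And>i. i \<in> I \<Longrightarrow> (\<Sum>j\<in>I. M i j * y j) = mu * y i"
proof -
  define d where "d = card I"
  obtain e where e: "bij_betw e {..<d} I"
    using ex_bij_betw_nat_finite[OF \<open>finite I\<close>] unfolding d_def atLeast0LessThan by blast
  define B where "B = mat d d (\<lambda>(k, k'). M (e k) (e k'))"
  have B: "B \<in> carrier_mat d d" unfolding B_def by simp
  have "d > 0" using assms unfolding d_def by (simp add: card_gt_0_iff)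
  then obtain mu where "eigenvalue B mu"
    using spectrum_non_empty[OF B] unfolding spectrum_def by auto
  then obtain v where "eigenvector B v mu" unfolding eigenvalue_def by auto
  then have v: "v \<in> carrier_vec d" "v \<noteq> 0\<^sub>v d" "B *\<^sub>v v = mu \<cdot>\<^sub>v v"
    unfolding eigenvector_def using B by auto
  define y where "y i = vec_index v (inv_into {..<d} e i)" for i
  have y_e: "y (e k) = vec_index v k" if "k < d" for k
    unfolding y_def using bij_betw_inv_into_left[OF e] that by simp
  show thesis
  proof
    obtain k where "k < d" "vec_index v k \<noteq> 0"
      using v(1,2) by (metis carrier_vecD eq_vecI index_zero_vec)
    then show "\<exists>i\<in>I. y i \<noteq> 0" using y_e bij_betwE[OF e] by (metis lessThan_iff)
  next
    fix i assume "i \<in> I"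
    then obtain k where "k < d" "i = e k"
      using bij_betw_imp_surj_on[OF e] by (metis imageE lessThan_iff)
    have "(\<Sum>j\<in>I. M i j * y j) = (\<Sum>k'<d. M (e k) (e k') * vec_index v k')"
      using sum.reindex_bij_betw[OF e, of "\<lambda>j. M i j * y j"] y_e \<open>i = e k\<close> by simp
    also have "\<dots> = vec_index (B *\<^sub>v v) k"
      using \<open>k < d\<close> v(1) unfolding B_def
      by (simp add: mult_mat_vec_def scalar_prod_def lessThan_atLeast0)
    also have "\<dots> = mu * y i" using v(1,3) \<open>k < d\<close> y_e \<open>i = e k\<close> by simp
    finally show "(\<Sum>j\<in>I. M i j * y j) = mu * y i" .
  qed
qed

lemma translation_eigenfunction_exists:
  fixes U :: "('a::plus \<Rightarrow> complex) set"
  assumes sub: "fun_vs.subspace U" and "U \<subseteq> fun_vs.span S" "finite S" "U \<noteq> {0}"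
    and inv: "\<And>f. f \<in> U \<Longrightarrow> (\<lambda>x. f (x + t)) \<in> U"
  obtains mu v where "v \<in> U" "v \<noteq> 0" "\<And>x. v (x + t) = mu * v x"
proof -
  obtain B where B: "B \<subseteq> U" "fun_vs.independent B" "U \<subseteq> fun_vs.span B" "card B = fun_vs.dim U"
    by (rule fun_vs.basis_exists)
  have "finite B"
    using fun_vs.independent_span_bound[OF \<open>finite S\<close> B(2)] B(1) assms(2) by blast
  have "B \<noteq> {}"
  proof
    assume "B = {}"
    then have "U \<subseteq> {0}" using B(3) by simp
    then show False using \<open>U \<noteq> {0}\<close> fun_vs.subspace_0[OF sub] by blast
  qed
  have "\<exists>C. (\<lambda>x. b (x + t)) = (\<Sum>w\<in>B. fun_scale (C w) w)" if "b \<in> B" for b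
  proof -
    have "(\<lambda>x. b (x + t)) \<in> fun_vs.span B" using that B(1,3) inv by blast
    then show ?thesis unfolding fun_vs.span_finite[OF \<open>finite B\<close>] by blast
  qed
  then obtain C where C: "\<And>b. b \<in> B \<Longrightarrow> (\<lambda>x. b (x + t)) = (\<Sum>w\<in>B. fun_scale (C b w) w)"
    by metis
  obtain mu y where y: "\<exists>w\<in>B. y w \<noteq> 0" "\<And>w. w \<in> B \<Longrightarrow> (\<Sum>b\<in>B. C b w * y b) = mu * y w"
    using matrix_eigenvector_exists[OF \<open>finite B\<close> \<open>B \<noteq> {}\<close>, of "\<lambda>w b. C b w"] by blast
  define v where "v = (\<Sum>b\<in>B. fun_scale (y b) b)"
  show thesis
  proof
    show "v \<in> U"
      unfolding v_def using B(1) by (intro fun_vs.subspace_sum[OF sub] fun_vs.subspace_scale[OF sub]) auto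
    show "v \<noteq> 0"
    proof
      assume "v = 0"
      then have "\<forall>b\<in>B. y b = 0"
        using B(2)[unfolded fun_vs.independent_explicit_finite_subsets, rule_format, OF subset_refl \<open>finite B\<close>]
        unfolding v_def by blast
      then show False using y(1) by blast
    qed
    fix x
    have "v (x + t) = (\<Sum>b\<in>B. y b * (\<Sum>w\<in>B. C b w * w x))"
      unfolding v_def sum_fun_apply fun_scale_apply
    proof (rule sum.cong[OF refl])
      fix b assume "b \<in> B"
      show "y b * b (x + t) = y b * (\<Sum>w\<in>B. C b w * w x)"
        using fun_cong[OF C[OF \<open>b \<in> B\<close>], of x] by (simp add: sum_fun_apply)
    qed
    also have "\<dots> = (\<Sum>w\<in>B. (\<Sum>b\<in>B. C b w * y b) * w x)"
      unfolding sum_distrib_left sum_distrib_right by (subst sum.swap) (simp add: mult_ac)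
    also have "\<dots> = mu * v x"
      unfolding v_def sum_fun_apply fun_scale_apply sum_distrib_left
      by (intro sum.cong refl) (simp add: y(2) mult.assoc)
    finally show "v (x + t) = mu * v x" .
  qed
qed

lemma translation_eigenspace:
  fixes U :: "('a::ab_semigroup_add \<Rightarrow> complex) set"
  assumes sub: "fun_vs.subspace U" and inv: "translation_invariant U"
  shows "fun_vs.subspace {f \<in> U. \<forall>x. f (x + t) = mu * f x}" (is "fun_vs.subspace ?E")
    and "translation_invariant {f \<in> U. \<forall>x. f (x + t) = mu * f x}"
proof -
  show "fun_vs.subspace ?E"
    unfolding fun_vs.subspace_def
  proof (intro conjI ballI allI CollectI)
    show "0 \<in> U" by (rule fun_vs.subspace_0[OF sub])
    show "(0 :: 'a \<Rightarrow> complex) (x + t) = mu * 0 x" for x by simp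
  next
    fix f g assume f: "f \<in> ?E" and g: "g \<in> ?E"
    then show "f + g \<in> U" using fun_vs.subspace_add[OF sub] by blast
    show "(f + g) (x + t) = mu * (f + g) x" for x using f g by (simp add: distrib_left)
  next
    fix r f assume f: "f \<in> ?E"
    then show "fun_scale r f \<in> U" using fun_vs.subspace_scale[OF sub] by blast
    show "fun_scale r f (x + t) = mu * fun_scale r f x" for x using f by simp
  qed
  have "(\<lambda>x. f (x + s)) \<in> ?E" if "f \<in> ?E" for f s
  proof -
    have "f (x + s + t) = mu * f (x + s)" for x using that by simp
    moreover have "x + t + s = x + s + t" for x :: 'a by (simp add: ac_simps)
    ultimately have "\<forall>x. f (x + t + s) = mu * f (x + s)" by simp
    moreover have "(\<lambda>x. f (x + s)) \<in> U" using inv that unfolding translation_invariant_def by blast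
    ultimately show ?thesis by simp
  qed
  then show "translation_invariant ?E" unfolding translation_invariant_def by blast
qed

lemma common_translation_eigenfunction_exists:
  fixes U :: "('a::ab_semigroup_add \<Rightarrow> complex) set"
  assumes "fun_vs.subspace U" "U \<subseteq> fun_vs.span S" "finite S" "U \<noteq> {0}" "translation_invariant U"
  shows "\<exists>f\<in>U. f \<noteq> 0 \<and> (\<forall>t. \<exists>mu. \<forall>x. f (x + t) = mu * f x)"
  using assms
proof (induction "fun_vs.dim U" arbitrary: U rule: less_induct)
  \<comment> \<open>Either every translation acts on U as a scalar, or some translation has an eigenspace
    in U that is proper, nonzero and again translation invariant.\<close>
  case less
  show ?case
  proof (cases "\<forall>t. \<exists>mu. \<forall>f\<in>U. \<forall>x. f (x + t) = mu * f x")
    case True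
    obtain f where "f \<in> U" "f \<noteq> 0" using less.prems(1,4) fun_vs.subspace_0 by blast
    with True show ?thesis by blast
  next
    case False
    then obtain t where t: "\<nexists>mu. \<forall>f\<in>U. \<forall>x. f (x + t) = mu * f x" by blast
    have "\<And>f. f \<in> U \<Longrightarrow> (\<lambda>x. f (x + t)) \<in> U"
      using less.prems(5) unfolding translation_invariant_def by blast
    then obtain mu v where "v \<in> U" "v \<noteq> 0" "\<And>x. v (x + t) = mu * v x"
      using translation_eigenfunction_exists[OF less.prems(1-4)] by blast
    define E where "E = {f \<in> U. \<forall>x. f (x + t) = mu * f x}"
    have E: "fun_vs.subspace E" "translation_invariant E"
      unfolding E_def using translation_eigenspace less.prems(1,5) by blast+
    have "E \<noteq> U"
    proof
      assume "E = U"
      then have "\<forall>f\<in>U. \<forall>x. f (x + t) = mu * f x" unfolding E_def by blast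
      with t show False by blast
    qed
    then have "E \<subset> U" unfolding E_def by blast
    have "E \<noteq> {0}"
      using \<open>v \<in> U\<close> \<open>v \<noteq> 0\<close> \<open>\<And>x. v (x + t) = mu * v x\<close> unfolding E_def by blast
    have "fun_vs.dim E < fun_vs.dim U"
      using fun_vs.dim_less_if_psubspace[OF E(1) \<open>E \<subset> U\<close> less.prems(2,3)] .
    moreover have "E \<subseteq> fun_vs.span S" using \<open>E \<subset> U\<close> less.prems(2) by blast
    ultimately have "\<exists>f\<in>E. f \<noteq> 0 \<and> (\<forall>t. \<exists>mu. \<forall>x. f (x + t) = mu * f x)"
      using less.hyps E(1,2) less.prems(3) \<open>E \<noteq> {0}\<close> by blast
    then show ?thesis using \<open>E \<subset> U\<close> by blast
  qed
qed

lemma continuous_bounded_eigenfunction_eq_expo: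
  fixes f :: "real^'n \<Rightarrow> complex"
  assumes cont: "continuous_on UNIV f" and bounded: "\<And>x. norm (f x) \<le> B" and "f \<noteq> 0"
    and eigen: "\<And>t. \<exists>mu. \<forall>x. f (x + t) = mu * f x"
  obtains l where "fun_scale (1 / f 0) f = expo l"
proof -
  have "f 0 \<noteq> 0"
  proof
    assume "f 0 = 0"
    have "f t = 0" for t
    proof -
      obtain mu where "\<forall>x. f (x + t) = mu * f x" using eigen by blast
      then have "f (0 + t) = mu * f 0" by blast
      then show "f t = 0" using \<open>f 0 = 0\<close> by simp
    qed
    then show False using \<open>f \<noteq> 0\<close> by (simp add: fun_eq_iff)
  qed
  define chi where "chi = fun_scale (1 / f 0) f"
  have "continuous_on UNIV chi"
    unfolding chi_def fun_scale_def by (intro continuous_on_mult continuous_on_const cont)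
  moreover have "chi (s + t) = chi s * chi t" for s t
  proof -
    obtain mu where mu: "\<forall>x. f (x + t) = mu * f x" using eigen by blast
    then have "f (0 + t) = mu * f 0" by blast
    then have "chi t = mu" unfolding chi_def using \<open>f 0 \<noteq> 0\<close> by simp
    moreover have "chi (s + t) = mu * chi s" unfolding chi_def using mu by simp
    ultimately show ?thesis by (simp add: mult.commute)
  qed
  moreover have "chi 0 = 1" unfolding chi_def using \<open>f 0 \<noteq> 0\<close> by simp
  moreover have "norm (chi s) \<le> norm (1 / f 0) * B" for s
    unfolding chi_def fun_scale_apply norm_mult by (intro mult_left_mono bounded) simp
  ultimately obtain l where "chi = expo l"
    by (rule continuous_bounded_character_eq_expo)
  then show thesis unfolding chi_def by (rule that)
qed

section \<open>From a kernel to a spectrum\<close>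

locale spectral_kernel =
  fixes A :: "(real^'n) set" and c :: "real^'n \<Rightarrow> complex"
  assumes finite_A: "finite A" and A_nonempty: "A \<noteq> {}"
    and continuous_c: "continuous_on UNIV c"
    and c_delta: "\<And>a a'. a \<in> A \<Longrightarrow> a' \<in> A \<Longrightarrow> c (a' - a) = (if a = a' then 1 else 0)"
    and c_uminus: "\<And>t. c (- t) = cnj (c t)"
    and c_diff: "\<And>u1 u2. c (u1 - u2) = (\<Sum>a\<in>A. c (u1 + a) * cnj (c (u2 + a)))"
begin

definition trans_comb :: "(real^'n \<Rightarrow> complex) \<Rightarrow> real^'n \<Rightarrow> complex" where
  "trans_comb \<alpha> x = (\<Sum>a\<in>A. \<alpha> a * c (x + a))"

definition trans_space :: "(real^'n \<Rightarrow> complex) set" where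
  "trans_space = range trans_comb"

(* By translates_orthonormal, trans_comb is an isometry from the functions on A, with the
   unnormalised inner product, onto trans_space with sample_inner. *)

definition sample_inner :: "(real^'n \<Rightarrow> complex) \<Rightarrow> (real^'n \<Rightarrow> complex) \<Rightarrow> complex" where
  "sample_inner f g = (\<Sum>b\<in>A. f (- b) * cnj (g (- b)))"

definition freqs :: "(real^'n) set" where
  "freqs = {l. expo l \<in> trans_space}"

lemma c_zero: "c 0 = 1"
proof -
  obtain a where "a \<in> A" using A_nonempty by blast
  then show ?thesis using c_delta[of a a] by simp
qed

lemma norm_c_le_1: "norm (c x) \<le> 1"
proof -
  obtain a0 where "a0 \<in> A" using A_nonempty by blast
  have "1 = c ((x - a0) - (x - a0))" by (simp add: c_zero)
  also have "\<dots> = (\<Sum>a\<in>A. of_real ((norm (c (x - a0 + a)))\<^sup>2))"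
    unfolding c_diff complex_norm_square by (rule refl)
  finally have "(\<Sum>a\<in>A. (norm (c (x - a0 + a)))\<^sup>2) = 1"
    by (metis of_real_eq_1_iff of_real_sum)
  moreover have "(norm (c (x - a0 + a0)))\<^sup>2 \<le> (\<Sum>a\<in>A. (norm (c (x - a0 + a)))\<^sup>2)"
    using \<open>a0 \<in> A\<close> finite_A by (intro member_le_sum) auto
  ultimately show ?thesis by (simp add: power_le_one_iff)
qed

lemma translates_orthonormal:
  assumes "a \<in> A" "a' \<in> A"
  shows "(\<Sum>b\<in>A. c (s - b + a) * cnj (c (s - b + a'))) = (if a = a' then 1 else 0)"
proof -
  have "(\<Sum>b\<in>A. c (s - b + a) * cnj (c (s - b + a')))
      = (\<Sum>b\<in>A. cnj (c (- s - a + b) * cnj (c (- s - a' + b))))"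
  proof (rule sum.cong[OF refl])
    fix b
    have "c (s - b + e) = cnj (c (- s - e + b))" for e
      using c_uminus[of "- s - e + b"] by (simp add: algebra_simps)
    then show "c (s - b + a) * cnj (c (s - b + a')) = cnj (c (- s - a + b) * cnj (c (- s - a' + b)))"
      by simp
  qed
  also have "\<dots> = cnj (\<Sum>b\<in>A. c (- s - a + b) * cnj (c (- s - a' + b)))"
    by (simp only: cnj_sum)
  also have "\<dots> = cnj (c ((- s - a) - (- s - a')))"
    by (simp only: c_diff)
  also have "(- s - a) - (- s - a') = a' - a"
    by (simp add: algebra_simps)
  finally show ?thesis using c_delta[OF assms] by simp
qed

lemma sample_inner_translate_trans_comb:
  "(\<Sum>b\<in>A. trans_comb \<alpha> (s - b) * cnj (trans_comb \<beta> (s - b))) = (\<Sum>a\<in>A. \<alpha> a * cnj (\<beta> a))"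
proof -
  have "(\<Sum>b\<in>A. trans_comb \<alpha> (s - b) * cnj (trans_comb \<beta> (s - b)))
      = (\<Sum>b\<in>A. \<Sum>a\<in>A. \<Sum>a'\<in>A. \<alpha> a * cnj (\<beta> a') * (c (s - b + a) * cnj (c (s - b + a'))))"
    unfolding trans_comb_def cnj_sum sum_product by (simp add: mult_ac)
  also have "\<dots> = (\<Sum>a\<in>A. \<Sum>a'\<in>A. \<alpha> a * cnj (\<beta> a') * (\<Sum>b\<in>A. c (s - b + a) * cnj (c (s - b + a'))))"
    unfolding sum_distrib_left by (rule trans[OF sum.swap sum.cong[OF refl sum.swap]])
  also have "\<dots> = (\<Sum>a\<in>A. \<Sum>a'\<in>A. \<alpha> a * cnj (\<beta> a') * (if a = a' then 1 else 0))"
    by (intro sum.cong refl) (simp add: translates_orthonormal)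
  also have "\<dots> = (\<Sum>a\<in>A. \<alpha> a * cnj (\<beta> a))"
    using finite_A by (simp add: if_distrib cong: if_cong)
  finally show ?thesis .
qed

lemma sample_inner_trans_comb:
  "sample_inner (trans_comb \<alpha>) (trans_comb \<beta>) = (\<Sum>a\<in>A. \<alpha> a * cnj (\<beta> a))"
  unfolding sample_inner_def using sample_inner_translate_trans_comb[of \<alpha> 0 \<beta>] by simp

lemma translate_trans_comb:
  "(\<lambda>x. trans_comb \<alpha> (x + t)) = trans_comb (\<lambda>a. \<Sum>a'\<in>A. \<alpha> a' * cnj (c (- t - a' + a)))"
proof
  fix x
  have "c (x + t + a') = (\<Sum>a\<in>A. c (x + a) * cnj (c (- t - a' + a)))" for a'
    using c_diff[of x "- t - a'"] by (simp add: algebra_simps)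
  then have "trans_comb \<alpha> (x + t) = (\<Sum>a'\<in>A. \<Sum>a\<in>A. \<alpha> a' * cnj (c (- t - a' + a)) * c (x + a))"
    unfolding trans_comb_def by (simp add: sum_distrib_left mult_ac)
  also have "\<dots> = trans_comb (\<lambda>a. \<Sum>a'\<in>A. \<alpha> a' * cnj (c (- t - a' + a))) x"
    unfolding trans_comb_def sum_distrib_right by (rule sum.swap)
  finally show "trans_comb \<alpha> (x + t) = trans_comb (\<lambda>a. \<Sum>a'\<in>A. \<alpha> a' * cnj (c (- t - a' + a))) x" .
qed

lemma translation_invariant_trans_space: "translation_invariant trans_space"
  unfolding translation_invariant_def trans_space_def using translate_trans_comb by auto

lemma sample_inner_translate:
  assumes "f \<in> trans_space" "g \<in> trans_space"
  shows "sample_inner (\<lambda>x. f (x + t)) (\<lambda>x. g (x + t)) = sample_inner f g"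
proof -
  obtain \<alpha> \<beta> where "f = trans_comb \<alpha>" "g = trans_comb \<beta>"
    using assms unfolding trans_space_def by auto
  then show ?thesis
    using sample_inner_translate_trans_comb[of \<alpha> t \<beta>] sample_inner_trans_comb[of \<alpha> \<beta>]
    unfolding sample_inner_def by simp
qed

lemma subspace_trans_space: "fun_vs.subspace trans_space"
  unfolding fun_vs.subspace_def trans_space_def
proof (intro conjI ballI allI)
  show "0 \<in> range trans_comb"
    by (rule range_eqI[of _ _ "\<lambda>_. 0"]) (simp add: trans_comb_def fun_eq_iff)
next
  fix f g assume "f \<in> range trans_comb" "g \<in> range trans_comb"
  then obtain \<alpha> \<beta> where "f = trans_comb \<alpha>" "g = trans_comb \<beta>" by blast
  then show "f + g \<in> range trans_comb"
    by (intro range_eqI[of _ _ "\<lambda>a. \<alpha> a + \<beta> a"])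
      (simp add: trans_comb_def fun_eq_iff sum.distrib algebra_simps)
next
  fix r f assume "f \<in> range trans_comb"
  then obtain \<alpha> where "f = trans_comb \<alpha>" by blast
  then show "fun_scale r f \<in> range trans_comb"
    by (intro range_eqI[of _ _ "\<lambda>a. r * \<alpha> a"])
      (simp add: trans_comb_def fun_eq_iff sum_distrib_left mult_ac)
qed

lemma trans_space_subset_span: "trans_space \<subseteq> fun_vs.span ((\<lambda>a x. c (x + a)) ` A)"
proof
  fix f assume "f \<in> trans_space"
  then obtain \<alpha> where "f = trans_comb \<alpha>" unfolding trans_space_def by blast
  also have "\<dots> = (\<Sum>a\<in>A. fun_scale (\<alpha> a) (\<lambda>x. c (x + a)))"
    by (simp add: fun_eq_iff sum_fun_apply trans_comb_def)
  also have "\<dots> \<in> fun_vs.span ((\<lambda>a x. c (x + a)) ` A)"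
    by (intro fun_vs.span_sum fun_vs.span_scale fun_vs.span_base) simp
  finally show "f \<in> fun_vs.span ((\<lambda>a x. c (x + a)) ` A)" .
qed

lemma c_in_trans_space: "c \<in> trans_space"
proof -
  have "c x = trans_comb (\<lambda>a. cnj (c a)) x" for x
    using c_diff[of x 0] unfolding trans_comb_def by (simp add: mult.commute)
  then have "c = trans_comb (\<lambda>a. cnj (c a))" by (rule ext)
  then show ?thesis unfolding trans_space_def by (metis rangeI)
qed

lemma continuous_on_trans_comb: "continuous_on UNIV (trans_comb \<alpha>)"
  unfolding trans_comb_def
  by (intro continuous_on_sum continuous_on_mult continuous_on_const
      continuous_on_translate[OF continuous_c])

lemma norm_trans_comb_le: "norm (trans_comb \<alpha> x) \<le> (\<Sum>a\<in>A. norm (\<alpha> a))"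
  unfolding trans_comb_def
  by (rule order_trans[OF norm_sum sum_mono])
    (simp add: norm_mult mult_left_le norm_c_le_1)


lemma sample_inner_add_left: "sample_inner (f + g) h = sample_inner f h + sample_inner g h"
  unfolding sample_inner_def by (simp add: sum.distrib distrib_right)

lemma sample_inner_diff_left: "sample_inner (f - g) h = sample_inner f h - sample_inner g h"
  unfolding sample_inner_def by (simp add: sum_subtractf left_diff_distrib)

lemma sample_inner_scale_left: "sample_inner (fun_scale r f) h = r * sample_inner f h"
  unfolding sample_inner_def by (simp add: sum_distrib_left mult_ac)

lemma sample_inner_scale_right: "sample_inner f (fun_scale r h) = cnj r * sample_inner f h"
  unfolding sample_inner_def by (simp add: sum_distrib_left mult_ac)

lemma sample_inner_sum_left:
  "sample_inner (\<Sum>i\<in>I. fun_scale (u i) (f i)) g = (\<Sum>i\<in>I. u i * sample_inner (f i) g)"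
  unfolding sample_inner_def
  by (simp add: sum_fun_apply sum_distrib_left sum_distrib_right mult_ac sum.swap[of _ A])

lemma sample_inner_expo: "sample_inner (expo l) (expo l') = cnj (\<Sum>a\<in>A. expo l a * cnj (expo l' a))"
  unfolding sample_inner_def by (simp add: cnj_sum expo_uminus)

lemma sample_inner_expo_self: "sample_inner (expo l) (expo l) = card A"
  unfolding sample_inner_def by (simp add: expo_mult_cnj)

lemma sample_inner_freqs:
  assumes "l \<in> freqs" "l' \<in> freqs"
  shows "sample_inner (expo l) (expo l') = (if l = l' then card A else 0)"
proof (cases "l = l'")
  case False
  \<comment> \<open>Translating both sides by t multiplies the product by expo (l - l') t, which can be -1.\<close>
  define S where "S = sample_inner (expo l) (expo l')"
  have "S = expo (l - l') t * S" for t
  proof -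
    have "S = sample_inner (\<lambda>x. expo l (x + t)) (\<lambda>x. expo l' (x + t))"
      unfolding S_def using sample_inner_translate[of "expo l" "expo l'" t] assms
      unfolding freqs_def by simp
    also have "\<dots> = (expo l t * cnj (expo l' t)) * S"
      unfolding translate_expo sample_inner_scale_left sample_inner_scale_right S_def by simp
    finally show ?thesis by (simp only: expo_mult_cnj_expo)
  qed
  moreover obtain t where "expo (l - l') t = -1"
    using expo_eq_minus_one False by (metis right_minus_eq)
  ultimately have "S = - S" by (metis mult_minus1)
  then have "S + S = 0" by (metis add.right_inverse)
  then have "S = 0" by (simp flip: mult_2)
  then show ?thesis using False unfolding S_def by simp
qed (simp add: sample_inner_expo_self)

lemma finite_freqs: "finite freqs"
proof -
  have "fun_vs.independent (expo ` freqs)"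
    unfolding fun_vs.independent_explicit_finite_subsets
  proof (intro allI impI ballI)
    fix T u f
    assume T: "T \<subseteq> expo ` freqs" "finite T" and sum_0: "(\<Sum>g\<in>T. fun_scale (u g) g) = 0"
      and "f \<in> T"
    obtain l where "l \<in> freqs" "f = expo l" using T(1) \<open>f \<in> T\<close> by blast
    have "0 = sample_inner (\<Sum>g\<in>T. fun_scale (u g) g) (expo l)"
      unfolding sum_0 by (simp add: sample_inner_def)
    also have "\<dots> = (\<Sum>g\<in>T. u g * sample_inner g (expo l))"
      by (rule sample_inner_sum_left)
    also have "\<dots> = (\<Sum>g\<in>T. if g = f then u f * card A else 0)"
    proof (rule sum.cong[OF refl])
      fix g assume "g \<in> T"
      then obtain l' where "l' \<in> freqs" "g = expo l'" using T(1) by blast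
      then show "u g * sample_inner g (expo l) = (if g = f then u f * card A else 0)"
        using \<open>l \<in> freqs\<close> \<open>f = expo l\<close> by (simp add: sample_inner_freqs inj_eq[OF inj_expo])
    qed
    also have "\<dots> = u f * card A" using T(2) \<open>f \<in> T\<close> by simp
    finally show "u f = 0" using A_nonempty finite_A by simp
  qed
  moreover have "expo ` freqs \<subseteq> fun_vs.span ((\<lambda>a x. c (x + a)) ` A)"
    using trans_space_subset_span unfolding freqs_def by blast
  ultimately have "finite (expo ` freqs)"
    using fun_vs.independent_span_bound[OF finite_imageI[OF finite_A]] by blast
  then show ?thesis
    using finite_image_iff[OF inj_on_subset[OF inj_expo subset_UNIV]] by blast
qed

lemma invariant_subspace_contains_expo:
  assumes "fun_vs.subspace U" "U \<subseteq> trans_space" "U \<noteq> {0}" "translation_invariant U"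
  obtains l where "expo l \<in> U"
proof -
  have "U \<subseteq> fun_vs.span ((\<lambda>a x. c (x + a)) ` A)"
    using assms(2) trans_space_subset_span by blast
  moreover have "finite ((\<lambda>a x. c (x + a)) ` A)" using finite_A by simp
  ultimately have "\<exists>f\<in>U. f \<noteq> 0 \<and> (\<forall>t. \<exists>mu. \<forall>x. f (x + t) = mu * f x)"
    by (rule common_translation_eigenfunction_exists[OF assms(1) _ _ assms(3,4)])
  then obtain f where "f \<in> U" "f \<noteq> 0" and eigen: "\<And>t. \<exists>mu. \<forall>x. f (x + t) = mu * f x"
    by blast
  obtain \<alpha> where f: "f = trans_comb \<alpha>" using \<open>f \<in> U\<close> assms(2) unfolding trans_space_def by blast
  obtain l where "fun_scale (1 / f 0) f = expo l"
  proof (rule continuous_bounded_eigenfunction_eq_expo)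
    show "continuous_on UNIV f" unfolding f by (rule continuous_on_trans_comb)
    show "norm (f x) \<le> (\<Sum>a\<in>A. norm (\<alpha> a))" for x unfolding f by (rule norm_trans_comb_le)
  qed (use \<open>f \<noteq> 0\<close> eigen in blast)+
  moreover have "fun_scale (1 / f 0) f \<in> U"
    using assms(1) \<open>f \<in> U\<close> by (rule fun_vs.subspace_scale)
  ultimately show thesis by (intro that[of l]) simp
qed

lemma orthogonal_to_freqs_eq_0:
  assumes "f \<in> trans_space" "\<And>l. l \<in> freqs \<Longrightarrow> sample_inner f (expo l) = 0"
  shows "f = 0"
proof (rule ccontr)
  assume "f \<noteq> 0"
  \<comment> \<open>The orthogonal complement of the exponentials is a nonzero invariant subspace.\<close>
  define W where "W = {g \<in> trans_space. \<forall>l\<in>freqs. sample_inner g (expo l) = 0}"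
  have "fun_vs.subspace W"
    unfolding fun_vs.subspace_def W_def
  proof (intro conjI ballI allI CollectI)
    show "0 \<in> trans_space" by (rule fun_vs.subspace_0[OF subspace_trans_space])
    show "sample_inner 0 (expo l) = 0" for l by (simp add: sample_inner_def)
  next
    fix g h assume g: "g \<in> {g \<in> trans_space. \<forall>l\<in>freqs. sample_inner g (expo l) = 0}"
      and h: "h \<in> {g \<in> trans_space. \<forall>l\<in>freqs. sample_inner g (expo l) = 0}"
    then show "g + h \<in> trans_space"
      using fun_vs.subspace_add[OF subspace_trans_space] by blast
    show "sample_inner (g + h) (expo l) = 0" if "l \<in> freqs" for l
      using that g h by (simp add: sample_inner_add_left)
  next
    fix r g assume g: "g \<in> {g \<in> trans_space. \<forall>l\<in>freqs. sample_inner g (expo l) = 0}"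
    then show "fun_scale r g \<in> trans_space"
      using fun_vs.subspace_scale[OF subspace_trans_space] by blast
    show "sample_inner (fun_scale r g) (expo l) = 0" if "l \<in> freqs" for l
      using that g by (simp add: sample_inner_scale_left)
  qed
  moreover have "translation_invariant W"
    unfolding translation_invariant_def
  proof (intro ballI allI)
    fix g t assume "g \<in> W"
    then have "g \<in> trans_space" unfolding W_def by blast
    have "sample_inner (\<lambda>x. g (x + t)) (expo l) = 0" if "l \<in> freqs" for l
    proof -
      have "cnj (expo l t) * sample_inner (\<lambda>x. g (x + t)) (expo l) = sample_inner g (expo l)"
        using sample_inner_translate[OF \<open>g \<in> trans_space\<close>, of "expo l" t] that
        unfolding translate_expo sample_inner_scale_right freqs_def by simp
      then show ?thesis using \<open>g \<in> W\<close> that expo_nonzero[of l t] unfolding W_def by simp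
    qed
    then show "(\<lambda>x. g (x + t)) \<in> W"
      using translation_invariant_trans_space \<open>g \<in> trans_space\<close>
      unfolding W_def translation_invariant_def by blast
  qed
  moreover have "W \<subseteq> trans_space" "W \<noteq> {0}"
    using assms \<open>f \<noteq> 0\<close> unfolding W_def by blast+
  ultimately obtain l where "expo l \<in> W"
    using invariant_subspace_contains_expo[of W] by blast
  then have "l \<in> freqs" "sample_inner (expo l) (expo l) = 0" unfolding W_def freqs_def by blast+
  then show False using sample_inner_expo_self A_nonempty finite_A by simp
qed

lemma c_eq_sum_expo: "c = (\<Sum>l\<in>freqs. fun_scale (sample_inner c (expo l) / card A) (expo l))"
  (is "c = ?S")
proof -
  have "?S \<in> trans_space"
    by (intro fun_vs.subspace_sum[OF subspace_trans_space] fun_vs.subspace_scale[OF subspace_trans_space])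
      (simp add: freqs_def)
  then have "c - ?S \<in> trans_space"
    by (rule fun_vs.subspace_diff[OF subspace_trans_space c_in_trans_space])
  moreover have "sample_inner (c - ?S) (expo l) = 0" if "l \<in> freqs" for l
  proof -
    have "sample_inner ?S (expo l)
        = (\<Sum>l'\<in>freqs. sample_inner c (expo l') / card A * sample_inner (expo l') (expo l))"
      by (rule sample_inner_sum_left)
    also have "\<dots> = (\<Sum>l'\<in>freqs. if l' = l then sample_inner c (expo l) else 0)"
      using that A_nonempty finite_A by (intro sum.cong refl) (auto simp: sample_inner_freqs)
    also have "\<dots> = sample_inner c (expo l)" using finite_freqs that by simp
    finally show ?thesis by (simp add: sample_inner_diff_left)
  qed
  ultimately have "c - ?S = 0" by (rule orthogonal_to_freqs_eq_0)
  then show ?thesis by simp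
qed

theorem spectral: "spectral A"
  unfolding spectral_def orth_basis_exps_def
proof (rule exI[of _ freqs], intro conjI ballI impI allI)
  fix l l' assume "l \<in> freqs" "l' \<in> freqs" "l \<noteq> l'"
  then have "cnj (\<Sum>a\<in>A. expo l a * cnj (expo l' a)) = 0"
    using sample_inner_freqs[of l l'] unfolding sample_inner_expo by simp
  then have "(\<Sum>a\<in>A. expo l a * cnj (expo l' a)) = 0" by (simp only: complex_cnj_zero_iff)
  then show "L2_inner A (expo l) (expo l') = 0" unfolding L2_inner_def by simp
next
  fix f :: "real^'n \<Rightarrow> complex"
  define w where "w l = sample_inner c (expo l) / card A" for l
  have c_eq: "c t = (\<Sum>l\<in>freqs. w l * expo l t)" for t
    using fun_cong[OF c_eq_sum_expo, of t] unfolding w_def by (simp add: sum_fun_apply)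
  define coef where "coef l = (\<Sum>a0\<in>A. f a0 * w l * cnj (expo l a0))" for l
  have "f a = (\<Sum>l\<in>freqs. coef l * expo l a)" if "a \<in> A" for a
  proof -
    have "f a = (\<Sum>a0\<in>A. if a0 = a then f a0 else 0)"
      using that finite_A by simp
    also have "\<dots> = (\<Sum>a0\<in>A. f a0 * c (a - a0))"
      using that by (intro sum.cong refl) (auto simp: c_delta)
    also have "\<dots> = (\<Sum>a0\<in>A. \<Sum>l\<in>freqs. f a0 * w l * cnj (expo l a0) * expo l a)"
      by (intro sum.cong refl) (simp add: c_eq sum_distrib_left expo_diff mult_ac)
    also have "\<dots> = (\<Sum>l\<in>freqs. coef l * expo l a)"
      unfolding coef_def sum_distrib_right by (rule sum.swap)
    finally show ?thesis .
  qed
  then show "\<exists>L0 coef. finite L0 \<and> L0 \<subseteq> freqs \<and> (\<forall>a\<in>A. f a = (\<Sum>l\<in>L0. coef l * expo l a))"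
    using finite_freqs by blast
qed

end

section \<open>From a spectrum to a kernel\<close>

lemma orth_basis_exps_gram:
  assumes "orth_basis_exps A Lam" "l \<in> Lam" "l' \<in> Lam"
  shows "(\<Sum>a\<in>A. expo l a * cnj (expo l' a)) = (if l = l' then card A else 0)"
proof (cases "l = l'")
  case False
  then have "(\<Sum>a\<in>A. expo l a * cnj (expo l' a)) / card A = 0"
    using assms unfolding orth_basis_exps_def L2_inner_def by simp
  then show ?thesis using False by (cases "finite A") auto
qed (simp add: expo_mult_cnj)

lemma orth_basis_exps_coeff:
  assumes "orth_basis_exps A Lam" "finite L0" "L0 \<subseteq> Lam" "m \<in> Lam"
  shows "(\<Sum>a\<in>A. (\<Sum>l\<in>L0. coef l * expo l a) * cnj (expo m a)) = (if m \<in> L0 then coef m * card A else 0)"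
proof -
  have "(\<Sum>a\<in>A. (\<Sum>l\<in>L0. coef l * expo l a) * cnj (expo m a))
      = (\<Sum>l\<in>L0. coef l * (\<Sum>a\<in>A. expo l a * cnj (expo m a)))"
    by (simp add: sum_distrib_left sum_distrib_right mult.assoc sum.swap[of _ A])
  also have "\<dots> = (\<Sum>l\<in>L0. if l = m then coef m * card A else 0)"
    using assms by (intro sum.cong) (auto simp: orth_basis_exps_gram)
  also have "\<dots> = (if m \<in> L0 then coef m * card A else 0)"
    using assms(2) by simp
  finally show ?thesis .
qed

lemma orth_basis_exps_dual:
  assumes "finite A" "orth_basis_exps A Lam" "a0 \<in> A"
  shows "finite Lam" and "\<And>a. a \<in> A \<Longrightarrow> (\<Sum>l\<in>Lam. expo l (a - a0)) = (if a = a0 then card A else 0)"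
proof -
  \<comment> \<open>Expanding the indicator of a0 in the basis forces every frequency to occur.\<close>
  obtain L0 coef where L0: "finite L0" "L0 \<subseteq> Lam"
    and delta: "\<And>a. a \<in> A \<Longrightarrow> (if a = a0 then 1 else 0) = (\<Sum>l\<in>L0. coef l * expo l a)"
    using assms(2)[unfolded orth_basis_exps_def, THEN conjunct2, rule_format,
        of "\<lambda>a. if a = a0 then 1 else 0"]
    by blast
  have key: "cnj (expo m a0) = (if m \<in> L0 then coef m * card A else 0)" if "m \<in> Lam" for m
  proof -
    have "cnj (expo m a0) = (\<Sum>a\<in>A. if a = a0 then cnj (expo m a) else 0)"
      using assms(1,3) by simp
    also have "\<dots> = (\<Sum>a\<in>A. (if a = a0 then 1 else 0) * cnj (expo m a))"
      by (intro sum.cong) auto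
    also have "\<dots> = (\<Sum>a\<in>A. (\<Sum>l\<in>L0. coef l * expo l a) * cnj (expo m a))"
      using delta by (intro sum.cong) auto
    finally show ?thesis using orth_basis_exps_coeff[OF assms(2) L0 that] by simp
  qed
  have "m \<in> L0" and coef: "coef m = cnj (expo m a0) / card A" if "m \<in> Lam" for m
  proof -
    show "m \<in> L0" using key[OF that] expo_nonzero[of m a0] by (auto split: if_splits)
    then show "coef m = cnj (expo m a0) / card A" using key[OF that] assms(1,3) by auto
  qed
  then have "Lam = L0" using L0(2) by blast
  then show "finite Lam" using L0(1) by simp
  fix a assume "a \<in> A"
  have "(if a = a0 then 1 else 0) = (\<Sum>l\<in>Lam. expo l (a - a0) / card A)"
    using delta[OF \<open>a \<in> A\<close>] \<open>Lam = L0\<close> coef by (simp add: expo_diff mult_ac)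
  then show "(\<Sum>l\<in>Lam. expo l (a - a0)) = (if a = a0 then card A else 0)"
    using assms(1,3) by (auto simp: sum_divide_distrib[symmetric] split: if_splits)
qed

lemma orth_basis_exps_imp_spectral_kernel:
  assumes "finite A" "A \<noteq> {}" "orth_basis_exps A Lam"
  shows "spectral_kernel A (\<lambda>t. (\<Sum>l\<in>Lam. expo l t) / card A)" (is "spectral_kernel A ?c")
proof (rule spectral_kernel.intro)
  obtain a0 where "a0 \<in> A" using assms(2) by blast
  have "finite Lam" using orth_basis_exps_dual(1)[OF assms(1,3) \<open>a0 \<in> A\<close>] .
  show "finite A" "A \<noteq> {}" by (fact assms(1), fact assms(2))
  show "continuous_on UNIV ?c"
    using assms(1,2)
    by (intro continuous_on_divide continuous_on_sum continuous_on_expo continuous_on_const) simp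
  show "?c (a' - a) = (if a = a' then 1 else 0)" if "a \<in> A" "a' \<in> A" for a a'
    using orth_basis_exps_dual(2)[OF assms(1,3) that] assms(1,2) by auto
  show "?c (- t) = cnj (?c t)" for t
    by (simp add: expo_uminus)
  have swap: "(\<Sum>a\<in>A. \<Sum>l\<in>Lam. \<Sum>l'\<in>Lam. F a l l') = (\<Sum>l\<in>Lam. \<Sum>l'\<in>Lam. \<Sum>a\<in>A. F a l l')"
    for F :: "_ \<Rightarrow> _ \<Rightarrow> _ \<Rightarrow> complex"
    by (rule trans[OF sum.swap sum.cong[OF refl sum.swap]])
  fix u1 u2
  have "(\<Sum>a\<in>A. ?c (u1 + a) * cnj (?c (u2 + a)))
      = (\<Sum>a\<in>A. \<Sum>l\<in>Lam. \<Sum>l'\<in>Lam. expo l u1 * cnj (expo l' u2) * (expo l a * cnj (expo l' a)))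
        / (card A * card A)"
    by (simp add: expo_add sum_product sum_divide_distrib mult_ac)
  also have "\<dots> = (\<Sum>l\<in>Lam. \<Sum>l'\<in>Lam. expo l u1 * cnj (expo l' u2) * (\<Sum>a\<in>A. expo l a * cnj (expo l' a)))
        / (card A * card A)"
    unfolding swap sum_distrib_left ..
  also have "\<dots> = (\<Sum>l\<in>Lam. expo l u1 * cnj (expo l u2) * card A) / (card A * card A)"
    using \<open>finite Lam\<close> assms(3)
    by (simp add: orth_basis_exps_gram if_distrib cong: sum.cong if_cong)
  also have "\<dots> = ?c (u1 - u2)"
    using assms(1,2) by (simp add: expo_diff sum_distrib_right[symmetric])
  finally show "?c (u1 - u2) = (\<Sum>a\<in>A. ?c (u1 + a) * cnj (?c (u2 + a)))" by simp
qed

lemma spectral_kernel_iff: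
  "spectral_kernel A c \<longleftrightarrow> finite A \<and> A \<noteq> {} \<and> continuous_on UNIV c \<and>
    (\<forall>a\<in>A. \<forall>a'\<in>A. c (a' - a) = (if a = a' then 1 else 0)) \<and>
    (\<forall>t. c (- t) = cnj (c t)) \<and>
    (\<forall>u1 u2. c (u1 - u2) = (\<Sum>a\<in>A. c (u1 + a) * cnj (c (u2 + a))))"
  unfolding spectral_kernel_def by blast

theorem theorem2p7:
  fixes A :: "(real^'n) set"
  assumes "finite A"
  shows "spectral A \<longleftrightarrow>
    (\<exists>c :: real^'n \<Rightarrow> complex. continuous_on UNIV c \<and>
       (\<forall>a\<in>A. \<forall>a'\<in>A. c (a' - a) = (if a = a' then 1 else 0)) \<and>
       (\<forall>t. c (- t) = cnj (c t)) \<and>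
       (\<forall>u1 u2. c (u1 - u2) = (\<Sum>a\<in>A. c (u1 + a) * cnj (c (u2 + a)))))"
proof (cases "A = {}")
  case True
  have "orth_basis_exps A {}" unfolding orth_basis_exps_def True by simp
  then show ?thesis unfolding spectral_def True by (auto intro!: exI[of _ "\<lambda>_. 0"])
next
  case False
  have "spectral A \<longleftrightarrow> (\<exists>c. spectral_kernel A c)"
    using spectral_kernel.spectral orth_basis_exps_imp_spectral_kernel[OF assms False]
    unfolding spectral_def by blast
  then show ?thesis unfolding spectral_kernel_iff using assms False by simp
qed

end
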